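(* Let $(\Omega,\mathcal{A})$ be a measurable space with a $\sigma$-finite measure $\mu$, $\pi$ a probability density with respect to $\mu$, and $q_1,\dots,q_D$ transition densities (for each $x$, $q_d(x,\cdot)$ is a probability density with respect to $\mu$). Write $\bar\pi=\pi\otimes\pi$ and $(X,X')\sim\bar\pi$. Assume (A1): for every $d$, $\bar\pi\{(x,x'):q_d(x,x')=0\}=0$; (A2): for every $d$, $\mathbb{E}_{\bar\pi}[|\log q_d(X,X')|]<\infty$. Let $\mathcal{S}$, $\mathcal{E}_{\bar\pi}$, $F$, $\alpha^{\max}$ be as in the context, and let $(\alpha^t)_{t\ge1}$ be defined by $\alpha^1=(1/D,\dots,1/D)$ and $\alpha^{t+1}=F(\alpha^t)$. Then for every $\alpha\in\mathcal{S}$ with $\alpha\ne\alpha^{\max}$ there is a neighborhood $V_\alpha$ of $\alpha$ in $\mathcal{S}$ such that if $\alpha^{t_0}\in V_\alpha$ for some $t_0$, then there exists $t>t_0$ with $\alpha^t\notin V_\alpha$.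
   Context: $\mathcal{S}=\{\alpha\in\mathbb{R}^D:\alpha_d\ge0,\ \sum_d\alpha_d=1\}$; $\mathcal{E}_{\bar\pi}(\alpha)=\mathbb{E}_{\bar\pi}[\log\sum_{d=1}^D\alpha_dq_d(X,X')]$; $F(\alpha)=\big(\mathbb{E}_{\bar\pi}[\alpha_dq_d(X,X')/\sum_{j=1}^D\alpha_jq_j(X,X')]\big)_{1\le d\le D}$. Standing assumption of the paper's setting: $\mathcal{E}_{\bar\pi}$ is strictly concave on $\mathcal{S}$; $\alpha^{\max}$ denotes its unique global maximizer on $\mathcal{S}$. *)

theory Defs
  imports "HOL-Probability.Probability"
begin

text \<open>Index set {1..D} is rendered as a finite type 'd (D = CARD('d)); vectors alpha :: real^'d.\<close>

definition prob_simplex :: "(real^'d::finite) set" where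
  "prob_simplex = {\<alpha>. (\<forall>d. \<alpha>$d \<ge> 0) \<and> (\<Sum>d\<in>UNIV. \<alpha>$d) = 1}"

definition pibar :: "'a measure \<Rightarrow> ('a \<Rightarrow> real) \<Rightarrow> ('a \<times> 'a) measure" where
  "pibar M \<pi> = density (M \<Otimes>\<^sub>M M) (\<lambda>z. ennreal (\<pi> (fst z) * \<pi> (snd z)))"

definition Eobj :: "'a measure \<Rightarrow> ('a \<Rightarrow> real) \<Rightarrow> ('d::finite \<Rightarrow> 'a \<Rightarrow> 'a \<Rightarrow> real)
    \<Rightarrow> real^'d \<Rightarrow> real" where
  "Eobj M \<pi> q \<alpha> = (\<integral>z. ln (\<Sum>d\<in>UNIV. \<alpha>$d * q d (fst z) (snd z)) \<partial>pibar M \<pi>)"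

definition Fmap :: "'a measure \<Rightarrow> ('a \<Rightarrow> real) \<Rightarrow> ('d::finite \<Rightarrow> 'a \<Rightarrow> 'a \<Rightarrow> real)
    \<Rightarrow> real^'d \<Rightarrow> real^'d" where
  "Fmap M \<pi> q \<alpha> = (\<chi> d. \<integral>z. \<alpha>$d * q d (fst z) (snd z)
        / (\<Sum>j\<in>UNIV. \<alpha>$j * q j (fst z) (snd z)) \<partial>pibar M \<pi>)"

definition strictly_concave_on :: "'v::real_vector set \<Rightarrow> ('v \<Rightarrow> real) \<Rightarrow> bool" where
  "strictly_concave_on S f \<longleftrightarrow> (\<forall>x\<in>S. \<forall>y\<in>S. \<forall>u::real. x \<noteq> y \<and> 0 < u \<and> u < 1 \<longrightarrow>
      f (u *\<^sub>R x + (1 - u) *\<^sub>R y) > u * f x + (1 - u) * f y)"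

definition alpha_seq :: "(real^'d::finite \<Rightarrow> real^'d) \<Rightarrow> nat \<Rightarrow> real^'d" where
  "alpha_seq F t = (F ^^ (t - 1)) (\<chi> d. 1 / real CARD('d))"

end

theory Submission
  imports Defs
begin

text \<open>
  Write \<open>mix \<beta> = \<Sum>\<^sub>j \<beta>\<^sub>j q\<^sub>j\<close>. If \<open>\<alpha>\<close> is not the maximiser, then \<open>ln x \<le> x - 1\<close>, applied
  to \<open>mix \<alpha>max / mix \<alpha>\<close> and integrated, shows \<open>\<integral> q\<^sub>d / mix \<alpha> > 1\<close> for some component \<open>d\<close>.
  This integral is lower semicontinuous in \<open>\<alpha>\<close> (monotone convergence), so it stays above
  some \<open>c > 1\<close> on a neighbourhood \<open>V\<close> of \<open>\<alpha>\<close>. As \<open>F(\<beta>)\<^sub>d = \<beta>\<^sub>d \<integral> q\<^sub>d / mix \<beta>\<close>, the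
  \<open>d\<close>-th coordinate of the iterates is multiplied by at least \<open>c\<close> while they stay in \<open>V\<close>;
  it starts positive and never exceeds 1, so they cannot stay in \<open>V\<close> forever.
\<close>

lemma geometric_growth_unbounded:
  fixes x :: "nat \<Rightarrow> real"
  assumes c: "1 < c" and pos: "0 < x 0" and grow: "\<And>n. c * x n \<le> x (Suc n)"
  shows "\<exists>n. B < x n"
proof -
  have lower: "c ^ n * x 0 \<le> x n" for n
  proof (induction n)
    case (Suc n)
    have "c ^ Suc n * x 0 \<le> c * x n" using Suc c by simp
    also have "\<dots> \<le> x (Suc n)" by (rule grow)
    finally show ?case .
  qed simp
  obtain n where "B / x 0 < c ^ n" using real_arch_pow[OF c] by blast
  then have "B < c ^ n * x 0" using pos by (simp add: field_simps)
  with lower[of n] show ?thesis by (meson less_le_trans)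
qed

lemma prob_simplex_nonneg: "\<beta> \<in> prob_simplex \<Longrightarrow> 0 \<le> \<beta>$j"
  by (simp add: prob_simplex_def)

lemma prob_simplex_le_1: "\<beta> \<in> prob_simplex \<Longrightarrow> \<beta>$j \<le> 1"
  using member_le_sum[of j UNIV "\<lambda>j. \<beta>$j"] by (simp add: prob_simplex_def)

lemma uniform_in_prob_simplex: "((\<chi> d. 1 / real CARD('d)) :: real^'d::finite) \<in> prob_simplex"
  by (simp add: prob_simplex_def)

lemma prob_simplex_convex_comb_bounds:
  fixes f :: "'d::finite \<Rightarrow> real"
  assumes "\<beta> \<in> prob_simplex"
  shows "\<exists>k. f k \<le> (\<Sum>j\<in>UNIV. \<beta>$j * f j)" and "\<exists>k. (\<Sum>j\<in>UNIV. \<beta>$j * f j) \<le> f k"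
proof -
  have nonneg: "0 \<le> \<beta>$j" for j using assms by (rule prob_simplex_nonneg)
  have sum1: "(\<Sum>j\<in>UNIV. \<beta>$j) = 1" using assms by (simp add: prob_simplex_def)
  have "Min (range f) \<in> range f" "Max (range f) \<in> range f" by (rule Min_in Max_in; simp)+
  then obtain kmin kmax where min: "Min (range f) = f kmin" and max: "Max (range f) = f kmax"
    by blast
  have kmin: "f kmin \<le> f j" for j unfolding min[symmetric] by simp
  have kmax: "f j \<le> f kmax" for j unfolding max[symmetric] by simp
  have "f kmin = (\<Sum>j\<in>UNIV. \<beta>$j * f kmin)" by (simp add: sum_distrib_right[symmetric] sum1)
  also have "\<dots> \<le> (\<Sum>j\<in>UNIV. \<beta>$j * f j)" by (intro sum_mono mult_left_mono kmin nonneg)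
  finally show "\<exists>k. f k \<le> (\<Sum>j\<in>UNIV. \<beta>$j * f j)" ..
  have "(\<Sum>j\<in>UNIV. \<beta>$j * f j) \<le> (\<Sum>j\<in>UNIV. \<beta>$j * f kmax)" by (intro sum_mono mult_left_mono kmax nonneg)
  also have "\<dots> = f kmax" by (simp add: sum_distrib_right[symmetric] sum1)
  finally show "\<exists>k. (\<Sum>j\<in>UNIV. \<beta>$j * f j) \<le> f k" ..
qed

lemma alpha_seq_Suc: "1 \<le> t \<Longrightarrow> alpha_seq F (Suc t) = F (alpha_seq F t)"
  by (cases t) (simp_all add: alpha_seq_def)

lemma alpha_seq_invariant:
  assumes "A (\<chi> d. 1 / real CARD('d))" and "\<And>\<beta>. A \<beta> \<Longrightarrow> A (F \<beta>)"
  shows "A (alpha_seq F t :: real^'d::finite)"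
proof -
  have "A ((F ^^ n) (\<chi> d. 1 / real CARD('d)))" for n
    by (induction n) (simp_all add: assms)
  then show ?thesis by (simp add: alpha_seq_def)
qed

lemma prob_space_pibar:
  assumes "sigma_finite_measure M" and [measurable]: "\<pi> \<in> borel_measurable M"
    and \<pi>_nonneg: "\<And>x. x \<in> space M \<Longrightarrow> 0 \<le> \<pi> x" and \<pi>_int: "(\<integral>\<^sup>+ x. ennreal (\<pi> x) \<partial>M) = 1"
  shows "prob_space (pibar M \<pi>)"
proof
  interpret sigma_finite_measure M by fact
  have "emeasure (pibar M \<pi>) (space (pibar M \<pi>))
      = (\<integral>\<^sup>+ z. ennreal (\<pi> (fst z) * \<pi> (snd z)) \<partial>(M \<Otimes>\<^sub>M M))"
    unfolding pibar_def
    by (subst emeasure_density) (auto intro!: nn_integral_cong simp: space_pair_measure)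
  also have "\<dots> = (\<integral>\<^sup>+ x. \<integral>\<^sup>+ y. ennreal (\<pi> x) * ennreal (\<pi> y) \<partial>M \<partial>M)"
    by (subst nn_integral_fst[symmetric]) (auto simp: ennreal_mult \<pi>_nonneg intro!: nn_integral_cong)
  also have "\<dots> = 1"
    by (simp add: nn_integral_cmult \<pi>_int)
  finally show "emeasure (pibar M \<pi>) (space (pibar M \<pi>)) = 1" .
qed

locale mixture_setting =
  fixes M :: "'a measure" and \<pi> :: "'a \<Rightarrow> real"
    and q :: "'d::finite \<Rightarrow> 'a \<Rightarrow> 'a \<Rightarrow> real"
  assumes sigma_finite: "sigma_finite_measure M"
    and pi_meas[measurable]: "\<pi> \<in> borel_measurable M"
    and pi_nonneg: "\<And>x. x \<in> space M \<Longrightarrow> \<pi> x \<ge> 0"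
    and pi_int: "(\<integral>\<^sup>+ x. ennreal (\<pi> x) \<partial>M) = 1"
    and q_meas: "\<And>d. (\<lambda>z. q d (fst z) (snd z)) \<in> borel_measurable (M \<Otimes>\<^sub>M M)"
    and q_nonneg: "\<And>d x y. x \<in> space M \<Longrightarrow> y \<in> space M \<Longrightarrow> q d x y \<ge> 0"
    and q_nonzero_AE: "\<And>d. emeasure (pibar M \<pi>) {z \<in> space (M \<Otimes>\<^sub>M M). q d (fst z) (snd z) = 0} = 0"
    and ln_q_finite: "\<And>d. (\<integral>\<^sup>+ z. ennreal \<bar>ln (q d (fst z) (snd z))\<bar> \<partial>pibar M \<pi>) < \<infinity>"
begin

abbreviation "P \<equiv> pibar M \<pi>"
abbreviation "F \<equiv> Fmap M \<pi> q"

definition Q :: "'d \<Rightarrow> 'a \<times> 'a \<Rightarrow> real" where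
  "Q d z = q d (fst z) (snd z)"

definition mix :: "real^'d \<Rightarrow> 'a \<times> 'a \<Rightarrow> real" where
  "mix \<beta> z = (\<Sum>j\<in>UNIV. \<beta>$j * Q j z)"

definition ratio :: "real^'d \<Rightarrow> 'd \<Rightarrow> 'a \<times> 'a \<Rightarrow> real" where
  "ratio \<beta> d z = Q d z / mix \<beta> z"

lemma sets_P[measurable_cong]: "sets P = sets (M \<Otimes>\<^sub>M M)"
  by (simp add: pibar_def)

lemma space_P: "space P = space M \<times> space M"
  by (simp add: pibar_def space_pair_measure)

lemma Q_meas[measurable]: "Q d \<in> borel_measurable P"
  unfolding Q_def using q_meas by (simp add: measurable_cong_sets[OF sets_P refl])

lemma mix_meas[measurable]: "mix \<beta> \<in> borel_measurable P"
  unfolding mix_def by measurable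

lemma ratio_meas[measurable]: "ratio \<beta> d \<in> borel_measurable P"
  unfolding ratio_def by measurable

lemma Q_nonneg: "z \<in> space P \<Longrightarrow> 0 \<le> Q j z"
  unfolding Q_def space_P by (auto intro: q_nonneg)

sublocale P: prob_space P
  by (rule prob_space_pibar[OF sigma_finite pi_meas pi_nonneg pi_int])

lemma AE_Q_pos: "AE z in P. \<forall>j. 0 < Q j z"
proof -
  have "AE z in P. 0 < Q j z" for j
  proof -
    have "{z \<in> space (M \<Otimes>\<^sub>M M). q j (fst z) (snd z) = 0} = {z \<in> space P. Q j z = 0}"
      by (auto simp: Q_def space_P space_pair_measure)
    then have "AE z in P. Q j z \<noteq> 0"
      using q_nonzero_AE[of j] by (subst AE_iff_measurable) auto
    with AE_space show ?thesis
      by eventually_elim (use Q_nonneg in \<open>force simp: le_less\<close>)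
  qed
  then show ?thesis by (simp add: AE_all_countable)
qed

lemma mix_pos: "\<beta> \<in> prob_simplex \<Longrightarrow> \<forall>j. 0 < Q j z \<Longrightarrow> 0 < mix \<beta> z"
  using prob_simplex_convex_comb_bounds(1)[of \<beta> "\<lambda>j. Q j z"]
  by (auto simp: mix_def intro: less_le_trans)

lemma integrable_ln_mix:
  assumes "\<beta> \<in> prob_simplex"
  shows "integrable P (\<lambda>z. ln (mix \<beta> z))"
proof (rule Bochner_Integration.integrable_bound)
  have "integrable P (\<lambda>z. ln (Q j z))" for j
    using ln_q_finite[of j] by (intro integrableI_bounded) (measurable, simp add: Q_def)
  then show "integrable P (\<lambda>z. \<Sum>j\<in>UNIV. \<bar>ln (Q j z)\<bar>)" by auto
  show "AE z in P. norm (ln (mix \<beta> z)) \<le> norm (\<Sum>j\<in>UNIV. \<bar>ln (Q j z)\<bar>)"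
    using AE_Q_pos
  proof eventually_elim
    case (elim z)
    obtain k1 k2 where k: "Q k1 z \<le> mix \<beta> z" "mix \<beta> z \<le> Q k2 z"
      using prob_simplex_convex_comb_bounds[OF assms, of "\<lambda>j. Q j z"] by (auto simp: mix_def)
    have "ln (Q k1 z) \<le> ln (mix \<beta> z)" "ln (mix \<beta> z) \<le> ln (Q k2 z)"
      using k elim by (meson ln_le_cancel_iff less_le_trans)+
    then have "\<bar>ln (mix \<beta> z)\<bar> \<le> max \<bar>ln (Q k1 z)\<bar> \<bar>ln (Q k2 z)\<bar>" by linarith
    also have "\<dots> \<le> (\<Sum>j\<in>UNIV. \<bar>ln (Q j z)\<bar>)"
      using member_le_sum[of _ UNIV "\<lambda>j. \<bar>ln (Q j z)\<bar>"] by simp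
    finally show ?case by (simp add: sum_nonneg)
  qed
qed simp

lemma Eobj_eq: "Eobj M \<pi> q \<beta> = (\<integral>z. ln (mix \<beta> z) \<partial>P)"
  by (simp add: Eobj_def mix_def Q_def)

lemma Fmap_nth: "F \<beta> $ d = (\<integral>z. \<beta>$d * ratio \<beta> d z \<partial>P)"
  by (simp add: Fmap_def ratio_def mix_def Q_def)

lemma ratio_nonneg: "\<beta> \<in> prob_simplex \<Longrightarrow> \<forall>j. 0 < Q j z \<Longrightarrow> 0 \<le> ratio \<beta> d z"
  using mix_pos[of \<beta> z] by (simp add: ratio_def less_imp_le)

lemma weighted_ratio_le_1:
  assumes "\<beta> \<in> prob_simplex" and Q_pos: "\<forall>j. 0 < Q j z"
  shows "\<beta>$d * ratio \<beta> d z \<le> 1"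
proof -
  have "0 \<le> Q j z" for j using Q_pos less_imp_le by blast
  then have "\<beta>$d * Q d z \<le> mix \<beta> z"
    unfolding mix_def using prob_simplex_nonneg[OF assms(1)]
    by (intro member_le_sum[where f = "\<lambda>j. \<beta>$j * Q j z"]) auto
  then show ?thesis using mix_pos[OF assms] by (simp add: ratio_def)
qed

lemma integrable_weighted_ratio: "\<beta> \<in> prob_simplex \<Longrightarrow> integrable P (\<lambda>z. \<beta>$d * ratio \<beta> d z)"
  by (rule P.integrable_const_bound[where B = 1], use AE_Q_pos in eventually_elim)
     (auto simp: weighted_ratio_le_1 ratio_nonneg prob_simplex_nonneg)

lemma Fmap_nth_ennreal:
  assumes "\<beta> \<in> prob_simplex"
  shows "ennreal (F \<beta> $ d) = ennreal (\<beta>$d) * (\<integral>\<^sup>+ z. ratio \<beta> d z \<partial>P)"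
proof -
  have "AE z in P. 0 \<le> \<beta>$d * ratio \<beta> d z"
    using AE_Q_pos by eventually_elim (simp add: assms ratio_nonneg prob_simplex_nonneg)
  then have "ennreal (F \<beta> $ d) = (\<integral>\<^sup>+ z. \<beta>$d * ratio \<beta> d z \<partial>P)"
    unfolding Fmap_nth by (intro nn_integral_eq_integral[symmetric] integrable_weighted_ratio assms)
  also have "\<dots> = (\<integral>\<^sup>+ z. ennreal (\<beta>$d) * ratio \<beta> d z \<partial>P)"
    using AE_Q_pos
    by (intro nn_integral_cong_AE, eventually_elim)
       (simp add: ennreal_mult assms ratio_nonneg prob_simplex_nonneg)
  also have "\<dots> = ennreal (\<beta>$d) * (\<integral>\<^sup>+ z. ratio \<beta> d z \<partial>P)"
    by (rule nn_integral_cmult) measurable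
  finally show ?thesis .
qed

lemma Fmap_in_prob_simplex:
  assumes "\<beta> \<in> prob_simplex"
  shows "F \<beta> \<in> prob_simplex"
proof -
  have "0 \<le> F \<beta> $ d" for d
    unfolding Fmap_nth using AE_Q_pos
    by (intro integral_nonneg_AE, eventually_elim) (simp add: assms ratio_nonneg prob_simplex_nonneg)
  moreover have "(\<Sum>d\<in>UNIV. F \<beta> $ d) = (\<integral>z. (\<Sum>d\<in>UNIV. \<beta>$d * ratio \<beta> d z) \<partial>P)"
    unfolding Fmap_nth by (intro Bochner_Integration.integral_sum[symmetric] integrable_weighted_ratio assms)
  moreover have "\<dots> = (\<integral>z. 1 \<partial>P)"
    using AE_Q_pos
  proof (intro integral_cong_AE, measurable, eventually_elim)
    case (elim z)
    then show ?case
      using mix_pos[OF assms, of z] elim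
      by (simp add: ratio_def mix_def sum_divide_distrib[symmetric] times_divide_eq_right)
  qed
  ultimately show ?thesis by (simp add: prob_simplex_def P.prob_space)
qed

lemma Fmap_nth_pos:
  assumes "\<beta> \<in> prob_simplex" and "0 < \<beta>$d"
  shows "0 < F \<beta> $ d"
proof -
  have "\<not> (AE z in P. ennreal (ratio \<beta> d z) = 0)"
  proof
    assume "AE z in P. ennreal (ratio \<beta> d z) = 0"
    with AE_Q_pos have "AE z in P. False"
    proof eventually_elim
      case (elim z)
      then have "0 < ratio \<beta> d z" using mix_pos[OF assms(1), of z] by (simp add: ratio_def)
      with elim show ?case by simp
    qed
    then show False by simp
  qed
  then have "(\<integral>\<^sup>+ z. ratio \<beta> d z \<partial>P) \<noteq> 0" by (simp add: nn_integral_0_iff_AE)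
  then have "0 < ennreal (F \<beta> $ d)"
    using Fmap_nth_ennreal[OF assms(1)] assms(2) by (simp add: zero_less_iff_neq_zero)
  then show ?thesis by simp
qed

lemma AE_ratio_nonneg: "\<alpha> \<in> prob_simplex \<Longrightarrow> AE z in P. 0 \<le> ratio \<alpha> d z"
  using AE_Q_pos by eventually_elim (rule ratio_nonneg)

lemma ln_mix_diff_le:
  assumes "\<alpha> \<in> prob_simplex" "\<beta> \<in> prob_simplex" and "\<forall>j. 0 < Q j z"
  shows "ln (mix \<beta> z) - ln (mix \<alpha> z) \<le> (\<Sum>d\<in>UNIV. \<beta>$d * ratio \<alpha> d z) - 1"
proof -
  have pos: "0 < mix \<alpha> z" "0 < mix \<beta> z" using assms mix_pos by auto
  then have "ln (mix \<beta> z) - ln (mix \<alpha> z) = ln (mix \<beta> z / mix \<alpha> z)" by (simp add: ln_div)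
  also have "\<dots> \<le> mix \<beta> z / mix \<alpha> z - 1" using pos by (intro ln_le_minus_one) simp
  also have "mix \<beta> z / mix \<alpha> z = (\<Sum>d\<in>UNIV. \<beta>$d * ratio \<alpha> d z)"
    by (simp add: mix_def[of \<beta>] ratio_def sum_divide_distrib)
  finally show ?thesis .
qed

lemma ratio_integral_gt_1_if_Eobj_less:
  assumes \<alpha>: "\<alpha> \<in> prob_simplex" and \<beta>: "\<beta> \<in> prob_simplex"
    and less: "Eobj M \<pi> q \<alpha> < Eobj M \<pi> q \<beta>"
  shows "\<exists>d. 1 < (\<integral>\<^sup>+ z. ratio \<alpha> d z \<partial>P)"
proof (rule ccontr)
  assume "\<not> ?thesis"
  then have nn_le_1: "(\<integral>\<^sup>+ z. ratio \<alpha> d z \<partial>P) \<le> 1" for d by (simp add: not_less)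
  have int: "integrable P (ratio \<alpha> d)" for d
    using nn_le_1[of d] by (intro integrableI_nonneg AE_ratio_nonneg \<alpha>) (measurable, simp add: le_less_trans)
  have le_1: "(\<integral>z. ratio \<alpha> d z \<partial>P) \<le> 1" for d
    using nn_le_1[of d] nn_integral_eq_integral[OF int AE_ratio_nonneg[OF \<alpha>]] by simp
  have "Eobj M \<pi> q \<beta> - Eobj M \<pi> q \<alpha> = (\<integral>z. ln (mix \<beta> z) - ln (mix \<alpha> z) \<partial>P)"
    unfolding Eobj_eq by (intro Bochner_Integration.integral_diff[symmetric] integrable_ln_mix \<alpha> \<beta>)
  also have "\<dots> \<le> (\<integral>z. (\<Sum>d\<in>UNIV. \<beta>$d * ratio \<alpha> d z) - 1 \<partial>P)"
  proof (rule integral_mono_AE)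
    show "AE z in P. ln (mix \<beta> z) - ln (mix \<alpha> z) \<le> (\<Sum>d\<in>UNIV. \<beta>$d * ratio \<alpha> d z) - 1"
      using AE_Q_pos by eventually_elim (rule ln_mix_diff_le[OF \<alpha> \<beta>])
  qed (use int integrable_ln_mix[OF \<alpha>] integrable_ln_mix[OF \<beta>] in auto)
  also have "\<dots> = (\<Sum>d\<in>UNIV. \<beta>$d * (\<integral>z. ratio \<alpha> d z \<partial>P)) - 1"
    using int by (simp add: P.prob_space)
  also have "\<dots> \<le> (\<Sum>d\<in>UNIV. \<beta>$d * 1) - 1"
    using \<beta> by (intro diff_right_mono sum_mono mult_left_mono le_1 prob_simplex_nonneg)
  also have "\<dots> = 0" using \<beta> by (simp add: prob_simplex_def)
  finally show False using less by simp
qed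

lemma mix_le_near:
  assumes Q_nonneg: "\<forall>j. 0 \<le> Q j z" and near: "dist \<beta> \<alpha> \<le> \<epsilon>"
  shows "mix \<beta> z \<le> mix \<alpha> z + \<epsilon> * mix 1 z"
proof -
  have "\<beta>$j - \<alpha>$j \<le> \<epsilon>" for j
    using component_le_norm_cart[of "\<beta> - \<alpha>" j] near by (simp add: dist_norm)
  then have "(\<Sum>j\<in>UNIV. (\<beta>$j - \<alpha>$j) * Q j z) \<le> (\<Sum>j\<in>UNIV. \<epsilon> * Q j z)"
    using Q_nonneg by (intro sum_mono mult_right_mono) auto
  then show ?thesis
    by (simp add: mix_def sum_distrib_left left_diff_distrib sum_subtractf)
qed

lemma ratio_ge_near:
  assumes "\<beta> \<in> prob_simplex" and Q_pos: "\<forall>j. 0 < Q j z" and "dist \<beta> \<alpha> \<le> \<epsilon>"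
  shows "Q d z / (mix \<alpha> z + \<epsilon> * mix 1 z) \<le> ratio \<beta> d z"
  unfolding ratio_def using assms mix_pos[of \<beta> z] mix_le_near[of z \<beta> \<alpha> \<epsilon>]
  by (intro divide_left_mono) (auto simp: less_imp_le)

text \<open>By \<open>mix_le_near\<close>, the perturbed denominator \<open>mix \<alpha> + \<epsilon> * mix 1\<close> dominates \<open>mix \<beta>\<close> for
  all \<open>\<beta>\<close> within \<open>\<epsilon>\<close> of \<open>\<alpha>\<close>; this gives lower semicontinuity of \<open>\<beta> \<mapsto> \<integral> ratio \<beta> d\<close>.\<close>

lemma nn_integral_ratio_SUP:
  assumes \<alpha>: "\<alpha> \<in> prob_simplex"
  shows "(SUP n. \<integral>\<^sup>+ z. Q d z / (mix \<alpha> z + 1 / real (Suc n) * mix 1 z) \<partial>P)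
    = (\<integral>\<^sup>+ z. ratio \<alpha> d z \<partial>P)"
proof -
  define h where "h n z = ennreal (Q d z / (mix \<alpha> z + 1 / real (Suc n) * mix 1 z))" for n z
  have "incseq (\<lambda>n. h n z) \<and> (SUP n. h n z) = ratio \<alpha> d z" if Q_pos: "\<forall>j. 0 < Q j z" for z
  proof
    have mix_pos': "0 < mix \<alpha> z" and "0 \<le> mix 1 z"
      using mix_pos[OF \<alpha> Q_pos] Q_pos by (auto simp: mix_def intro: sum_nonneg less_imp_le)
    then show inc: "incseq (\<lambda>n. h n z)"
      unfolding h_def using Q_pos
      by (intro incseq_SucI ennreal_leI divide_left_mono add_left_mono mult_right_mono
          add_pos_nonneg mult_pos_pos) (auto simp: less_imp_le frac_le)
    have "(\<lambda>n. 1 / real (Suc n) * mix 1 z) \<longlonglongrightarrow> 0 * mix 1 z"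
      by (intro tendsto_mult LIMSEQ_Suc[OF lim_inverse_n'] tendsto_const)
    then have "(\<lambda>n. Q d z / (mix \<alpha> z + 1 / real (Suc n) * mix 1 z))
        \<longlonglongrightarrow> Q d z / (mix \<alpha> z + 0 * mix 1 z)"
      using mix_pos' by (intro tendsto_divide tendsto_add tendsto_const) auto
    then have "(\<lambda>n. h n z) \<longlonglongrightarrow> ennreal (Q d z / (mix \<alpha> z + 0 * mix 1 z))"
      unfolding h_def by (rule tendsto_ennrealI)
    then show "(SUP n. h n z) = ratio \<alpha> d z"
      by (simp add: SUP_Lim[OF inc] ratio_def)
  qed
  then have "(\<integral>\<^sup>+ z. ratio \<alpha> d z \<partial>P) = (\<integral>\<^sup>+ z. (SUP n. h n z) \<partial>P)"
    and "AE z in P. h n z \<le> h (Suc n) z" for n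
    using AE_Q_pos by (auto intro!: nn_integral_cong_AE elim!: AE_mp intro: AE_I2 simp: incseq_Suc_iff)
  then show ?thesis
    by (simp add: nn_integral_monotone_convergence_SUP_AE h_def)
qed

lemma ratio_integral_bound_near:
  assumes \<alpha>: "\<alpha> \<in> prob_simplex" and big: "1 < (\<integral>\<^sup>+ z. ratio \<alpha> d z \<partial>P)"
  obtains r c where "0 < r" "1 < c"
    "\<And>\<beta>. \<beta> \<in> prob_simplex \<Longrightarrow> dist \<beta> \<alpha> < r \<Longrightarrow> ennreal c \<le> (\<integral>\<^sup>+ z. ratio \<beta> d z \<partial>P)"
proof -
  obtain n where n: "1 < (\<integral>\<^sup>+ z. Q d z / (mix \<alpha> z + 1 / real (Suc n) * mix 1 z) \<partial>P)"
    using big unfolding nn_integral_ratio_SUP[OF \<alpha>, symmetric] by (auto simp: less_SUP_iff)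
  then obtain c' where c': "1 < c'" "c' < (\<integral>\<^sup>+ z. Q d z / (mix \<alpha> z + 1 / real (Suc n) * mix 1 z) \<partial>P)"
    using dense by blast
  then obtain c where c: "c' = ennreal c" "0 \<le> c" by (cases c') (auto simp: top_unique)
  have "ennreal c \<le> (\<integral>\<^sup>+ z. ratio \<beta> d z \<partial>P)"
    if \<beta>: "\<beta> \<in> prob_simplex" and near: "dist \<beta> \<alpha> < 1 / real (Suc n)" for \<beta>
  proof -
    have "(\<integral>\<^sup>+ z. Q d z / (mix \<alpha> z + 1 / real (Suc n) * mix 1 z) \<partial>P) \<le> (\<integral>\<^sup>+ z. ratio \<beta> d z \<partial>P)"
    proof (intro nn_integral_mono_AE, use AE_Q_pos in eventually_elim)
      case (elim z)
      show ?case using ratio_ge_near[OF \<beta> elim less_imp_le[OF near]] by (rule ennreal_leI)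
    qed
    with c c' show ?thesis by simp
  qed
  with c c' show ?thesis by (intro that[of "1 / real (Suc n)" c]) auto
qed

lemma Fmap_nth_ge:
  assumes \<beta>: "\<beta> \<in> prob_simplex" and "0 \<le> c" and c_le: "ennreal c \<le> (\<integral>\<^sup>+ z. ratio \<beta> d z \<partial>P)"
  shows "c * \<beta>$d \<le> F \<beta> $ d"
proof -
  have "ennreal (c * \<beta>$d) = ennreal (\<beta>$d) * ennreal c"
    using assms by (simp add: ennreal_mult prob_simplex_nonneg mult.commute)
  also have "\<dots> \<le> ennreal (F \<beta> $ d)"
    unfolding Fmap_nth_ennreal[OF \<beta>] by (intro mult_left_mono c_le) simp
  finally show ?thesis
    using prob_simplex_nonneg[OF Fmap_in_prob_simplex[OF \<beta>]] by (simp add: ennreal_le_iff)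
qed

lemma alpha_seq_pos_in_prob_simplex: "alpha_seq F t \<in> prob_simplex \<and> (\<forall>d. 0 < alpha_seq F t $ d)"
  by (rule alpha_seq_invariant) (auto simp: uniform_in_prob_simplex Fmap_in_prob_simplex Fmap_nth_pos)

lemma alpha_seq_leaves_neighbourhood:
  assumes \<alpha>: "\<alpha> \<in> prob_simplex" and \<beta>: "\<beta> \<in> prob_simplex"
    and less: "Eobj M \<pi> q \<alpha> < Eobj M \<pi> q \<beta>"
  shows "\<exists>V. openin (top_of_set prob_simplex) V \<and> \<alpha> \<in> V \<and>
           (\<forall>t0\<ge>1. alpha_seq F t0 \<in> V \<longrightarrow> (\<exists>t>t0. alpha_seq F t \<notin> V))"
proof -
  obtain d where "1 < (\<integral>\<^sup>+ z. ratio \<alpha> d z \<partial>P)"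
    using ratio_integral_gt_1_if_Eobj_less[OF \<alpha> \<beta> less] ..
  then obtain r c where r: "0 < r" and c: "1 < c"
    and near: "\<And>\<gamma>. \<gamma> \<in> prob_simplex \<Longrightarrow> dist \<gamma> \<alpha> < r \<Longrightarrow> ennreal c \<le> (\<integral>\<^sup>+ z. ratio \<gamma> d z \<partial>P)"
    using ratio_integral_bound_near[OF \<alpha>] by blast
  define V where "V = prob_simplex \<inter> ball \<alpha> r"
  have "\<exists>t>t0. alpha_seq F t \<notin> V" if t0: "1 \<le> t0" and start: "alpha_seq F t0 \<in> V" for t0
  proof (rule ccontr)
    assume "\<not> ?thesis"
    with start have in_V: "alpha_seq F (t0 + n) \<in> V" for n
      by (cases n) auto
    define x where "x n = alpha_seq F (t0 + n) $ d" for n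
    have grow: "c * x n \<le> x (Suc n)" for n
    proof -
      have \<gamma>: "alpha_seq F (t0 + n) \<in> prob_simplex" "dist (alpha_seq F (t0 + n)) \<alpha> < r"
        using in_V[of n] by (auto simp: V_def dist_commute)
      have "alpha_seq F (t0 + Suc n) = F (alpha_seq F (t0 + n))"
        using t0 by (simp add: alpha_seq_Suc)
      then show ?thesis
        unfolding x_def using Fmap_nth_ge[OF \<gamma>(1) _ near[OF \<gamma>]] c by simp
    qed
    have "0 < x 0" unfolding x_def using alpha_seq_pos_in_prob_simplex by blast
    then obtain n where "1 < x n" using geometric_growth_unbounded[of c x 1] c grow by blast
    moreover have "x n \<le> 1"
      unfolding x_def by (intro prob_simplex_le_1) (use alpha_seq_pos_in_prob_simplex in blast)
    ultimately show False by simp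
  qed
  moreover have "openin (top_of_set prob_simplex) V" unfolding V_def by (intro openin_open_Int) simp
  moreover have "\<alpha> \<in> V" unfolding V_def using \<alpha> r by simp
  ultimately show ?thesis by blast
qed

end

theorem proposition4p2:
  fixes M :: "'a measure" and \<pi> :: "'a \<Rightarrow> real"
    and q :: "'d::finite \<Rightarrow> 'a \<Rightarrow> 'a \<Rightarrow> real"
    and \<alpha>max :: "real^'d"
  assumes sf: "sigma_finite_measure M"
    and pi_meas: "\<pi> \<in> borel_measurable M"
    and pi_nonneg: "\<And>x. x \<in> space M \<Longrightarrow> \<pi> x \<ge> 0"
    and pi_int: "(\<integral>\<^sup>+ x. ennreal (\<pi> x) \<partial>M) = 1"
    and q_meas: "\<And>d. (\<lambda>z. q d (fst z) (snd z)) \<in> borel_measurable (M \<Otimes>\<^sub>M M)"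
    and q_nonneg: "\<And>d x y. x \<in> space M \<Longrightarrow> y \<in> space M \<Longrightarrow> q d x y \<ge> 0"
    and q_int: "\<And>d x. x \<in> space M \<Longrightarrow> (\<integral>\<^sup>+ y. ennreal (q d x y) \<partial>M) = 1"
    and A1: "\<And>d. emeasure (pibar M \<pi>) {z \<in> space (M \<Otimes>\<^sub>M M). q d (fst z) (snd z) = 0} = 0"
    and A2: "\<And>d. (\<integral>\<^sup>+ z. ennreal \<bar>ln (q d (fst z) (snd z))\<bar> \<partial>pibar M \<pi>) < \<infinity>"
    and conc: "strictly_concave_on prob_simplex (Eobj M \<pi> q)"
    and max_in: "\<alpha>max \<in> prob_simplex"
    and max_unique: "\<And>\<beta>. \<beta> \<in> prob_simplex \<Longrightarrow> \<beta> \<noteq> \<alpha>max \<Longrightarrow> Eobj M \<pi> q \<beta> < Eobj M \<pi> q \<alpha>max"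
  shows "\<forall>\<alpha>\<in>prob_simplex. \<alpha> \<noteq> \<alpha>max \<longrightarrow>
           (\<exists>V. openin (top_of_set prob_simplex) V \<and> \<alpha> \<in> V \<and>
              (\<forall>t0\<ge>1. alpha_seq (Fmap M \<pi> q) t0 \<in> V \<longrightarrow>
                 (\<exists>t>t0. alpha_seq (Fmap M \<pi> q) t \<notin> V)))"
proof -
  interpret mixture_setting M \<pi> q
    by (rule mixture_setting.intro[OF sf pi_meas pi_nonneg pi_int q_meas q_nonneg A1 A2])
  show ?thesis
    using alpha_seq_leaves_neighbourhood[OF _ max_in max_unique] by blast
qed

end
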